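(* Let $R>0$ and let $B_{\mathcal D}=\{\beta_1,\dots,\beta_n\}$ with $0\le\beta_1\le\dots\le\beta_n$ and $\sum_i\beta_i=\beta$ be a bid set of $\mathcal D$. Fix $\ell\in\{1,\dots,n\}$ and suppose some $\ell$-set $I$ satisfies all three of: - (P1) $|I|\le n$; - (P2) $\Sigma(I)\ge \frac{R_\ell\,\ell(\ell+1)}{2}$; - (P3) $\sigma(I,\ell)+(n-|I|)\beta_{n-\ell}<R\beta$. Then $W(\pi_{\rm unif},B_{\mathcal D})\ge f(\ell)$.
   Context: Position-randomized auction with two bidders $\mathcal A$ and $\mathcal D$ and $n\ge1$ objects. $\mathcal D$ has budget $\beta>0$ and $\mathcal A$ has budget $R\beta$ with $R>0$. A bidding algorithm of a bidder is a pair $(\pi,B)$: $B$ (the bid set) is a multiset of $n$ nonnegative reals whose sum is at most the bidder's budget, and $\pi$ is a randomized algorithm permuting sequences of length $n$. Applying $\pi$ to a listing of $B$ gives the final bid sequence, whose $i$-th entry is the bid on object $i$. The two bidders' permutations are independent. Each object goes to the higher bid; on a tie each bidder wins it with probability $1/2$. $w(\pi_{\mathcal A},\pi_{\mathcal D},B_{\mathcal A},B_{\mathcal D})$ is the expected number of objects won by $\mathcal A$. $W(\pi_{\mathcal D},B_{\mathcal D})$ is its supremum over all bidding algorithms $(\pi_{\mathcal A},B_{\mathcal A})$ of $\mathcal A$. $\pi_{\rm unif}$ applies a uniformly random permutation. For $x,y>0$, $\mathrm{less}(x,y)=y(\lceil x/y\rceil-1)$. For $\ell=1,\dots,n$, let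 $R_\ell=\mathrm{less}(R,\frac2{\ell(\ell+1)})$ and $f(\ell)=n-\ell+\frac{\ell(\ell+1)R_\ell}{2n}$. Set $\beta_0=0$. An $\ell$-set is a finite multiset of elements of $\{0,1,\dots,\ell\}$. For a multiset $I$, $|I|$ is its cardinality and $\Sigma(I)$ the sum of its elements, both counting multiplicity. For an $\ell$-set $I$, $\sigma(I,\ell)=\sum_{i\in I}\beta_{n-\ell+i}$, counting multiplicity. *)

theory Defs
  imports "HOL-Probability.Probability" "HOL-Combinatorics.Permutations" "HOL-Library.Multiset"
begin

(* Objects and bid indices are 1..n.  A bid set is given by a listing
   a :: nat => real (entries a 1, ..., a n); a (randomized) permuting algorithm
   is a probability distribution over permutations tau of {1..n}; the final
   bid on object i is a (tau i). *)

definition win :: "real \<Rightarrow> real \<Rightarrow> real" where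
  "win x y = (if x > y then 1 else if x = y then 1/2 else 0)"

definition w_exp :: "nat \<Rightarrow> (nat \<Rightarrow> nat) pmf \<Rightarrow> (nat \<Rightarrow> nat) pmf
                      \<Rightarrow> (nat \<Rightarrow> real) \<Rightarrow> (nat \<Rightarrow> real) \<Rightarrow> real" where
  "w_exp n piA piD a b =
     measure_pmf.expectation (pair_pmf piA piD)
       (\<lambda>(\<tau>, \<sigma>). \<Sum>i\<in>{1..n}. win (a (\<tau> i)) (b (\<sigma> i)))"

definition bidding_alg :: "nat \<Rightarrow> real \<Rightarrow> (nat \<Rightarrow> nat) pmf \<Rightarrow> (nat \<Rightarrow> real) \<Rightarrow> bool" where
  "bidding_alg n bud p a \<longleftrightarrow>
     set_pmf p \<subseteq> {\<tau>. \<tau> permutes {1..n}} \<and>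
     (\<forall>i\<in>{1..n}. 0 \<le> a i) \<and> (\<Sum>i\<in>{1..n}. a i) \<le> bud"

definition pi_unif :: "nat \<Rightarrow> (nat \<Rightarrow> nat) pmf" where
  "pi_unif n = pmf_of_set {\<sigma>. \<sigma> permutes {1..n}}"

definition W :: "nat \<Rightarrow> real \<Rightarrow> (nat \<Rightarrow> nat) pmf \<Rightarrow> (nat \<Rightarrow> real) \<Rightarrow> real" where
  "W n budA piD b = Sup {w_exp n piA piD a b | piA a. bidding_alg n budA piA a}"

definition less :: "real \<Rightarrow> real \<Rightarrow> real" where
  "less x y = y * (real_of_int \<lceil>x / y\<rceil> - 1)"

definition R_l :: "real \<Rightarrow> nat \<Rightarrow> real" where
  "R_l R l = less R (2 / (real l * (real l + 1)))"

definition f_l :: "nat \<Rightarrow> real \<Rightarrow> nat \<Rightarrow> real" where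
  "f_l n R l = real n - real l + real l * (real l + 1) * R_l R l / (2 * real n)"

definition beta0 :: "(nat \<Rightarrow> real) \<Rightarrow> nat \<Rightarrow> real" where
  "beta0 b i = (if i = 0 then 0 else b i)"

definition l_set :: "nat \<Rightarrow> nat multiset \<Rightarrow> bool" where
  "l_set l I \<longleftrightarrow> (\<forall>i\<in>#I. i \<le> l)"

definition sigma_I :: "nat \<Rightarrow> (nat \<Rightarrow> real) \<Rightarrow> nat multiset \<Rightarrow> nat \<Rightarrow> real" where
  "sigma_I n b I l = (\<Sum>i\<in>#I. beta0 b (n - l + i))"

end

theory Submission
  imports Defs
begin

(* Bidder A plays deterministically.  Padding I with n - |I| zeros gives a multiset j_1, ..., j_n,
   and A bids on object i slightly more than beta_(n-l+j_i), spreading the slack in (P3) evenly.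
   Each such bid beats the n - l + j_i smallest bids of D, so against a uniformly random
   arrangement of D's bids object i is won with probability at least (n - l + j_i)/n.  Hence A
   expects at least n - l + Sigma(I)/n objects, which is at least f(l) by (P2). *)

lemma win_nonneg: "0 \<le> win x y"
  and win_le_one: "win x y \<le> 1"
  by (auto simp: win_def)

lemma sum_permutations_apply:
  fixes g :: "'a \<Rightarrow> 'b::comm_semiring_1"
  assumes "finite S" and "i \<in> S"
  shows "of_nat (card S) * (\<Sum>\<sigma> | \<sigma> permutes S. g (\<sigma> i))
           = of_nat (card {\<sigma>. \<sigma> permutes S}) * sum g S"
proof -
  let ?P = "{\<sigma>. \<sigma> permutes S}"
  have same: "(\<Sum>\<sigma>\<in>?P. g (\<sigma> j)) = (\<Sum>\<sigma>\<in>?P. g (\<sigma> i))" if "j \<in> S" for j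
    using sum_permutations_compose_right[OF permutes_swap_id[OF \<open>i \<in> S\<close> that],
        of "\<lambda>\<sigma>. g (\<sigma> i)"]
    by simp
  have "of_nat (card S) * (\<Sum>\<sigma>\<in>?P. g (\<sigma> i)) = (\<Sum>j\<in>S. \<Sum>\<sigma>\<in>?P. g (\<sigma> j))"
    by (simp add: same)
  also have "\<dots> = (\<Sum>\<sigma>\<in>?P. \<Sum>j\<in>S. g (\<sigma> j))"
    by (rule sum.swap)
  also have "\<dots> = (\<Sum>\<sigma>\<in>?P. sum g S)"
  proof (rule sum.cong[OF refl])
    fix \<sigma> assume "\<sigma> \<in> ?P"
    then show "(\<Sum>j\<in>S. g (\<sigma> j)) = sum g S"
      using sum.permute[of \<sigma> S g] by (simp add: comp_def)
  qed
  finally show ?thesis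
    by simp
qed

lemma expectation_uniform_permutation_apply:
  fixes g :: "'a \<Rightarrow> real"
  assumes "finite S" and "i \<in> S"
  shows "measure_pmf.expectation (pmf_of_set {\<sigma>. \<sigma> permutes S}) (\<lambda>\<sigma>. g (\<sigma> i))
           = sum g S / card S"
proof -
  let ?P = "{\<sigma>. \<sigma> permutes S}"
  have "finite ?P" and "?P \<noteq> {}"
    using finite_permutations[OF \<open>finite S\<close>] permutes_id[of S] by blast+
  then have "card ?P > 0" and "card S > 0"
    using assms by (auto simp: card_gt_0_iff)
  have "measure_pmf.expectation (pmf_of_set ?P) (\<lambda>\<sigma>. g (\<sigma> i))
          = (\<Sum>\<sigma>\<in>?P. g (\<sigma> i)) / card ?P"
    using \<open>?P \<noteq> {}\<close> \<open>finite ?P\<close> by (rule integral_pmf_of_set)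
  also have "\<dots> = card S * (\<Sum>\<sigma>\<in>?P. g (\<sigma> i)) / (card S * card ?P)"
    using \<open>card S > 0\<close> by simp
  also have "\<dots> = sum g S / card S"
    using \<open>card ?P > 0\<close> by (subst sum_permutations_apply[OF assms]) simp
  finally show ?thesis .
qed

lemma w_exp_id_pi_unif:
  "w_exp n (return_pmf id) (pi_unif n) a b
     = (\<Sum>i\<in>{1..n}. \<Sum>j\<in>{1..n}. win (a i) (b j)) / n"
proof -
  let ?U = "pmf_of_set {\<sigma>. \<sigma> permutes {1..n}}"
  have "finite (set_pmf ?U)"
    using permutes_id[of "{1..n}"] by (subst set_pmf_of_set) (blast, simp_all add: finite_permutations)
  then have "w_exp n (return_pmf id) (pi_unif n) a b
               = (\<Sum>i\<in>{1..n}. measure_pmf.expectation ?U (\<lambda>\<sigma>. win (a i) (b (\<sigma> i))))"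
    unfolding w_exp_def pi_unif_def pair_return_pmf1
    by (simp add: integrable_measure_pmf_finite)
  also have "\<dots> = (\<Sum>i\<in>{1..n}. (\<Sum>j\<in>{1..n}. win (a i) (b j)) / n)"
  proof (rule sum.cong[OF refl])
    fix i assume "i \<in> {1..n}"
    then show "measure_pmf.expectation ?U (\<lambda>\<sigma>. win (a i) (b (\<sigma> i)))
                 = (\<Sum>j\<in>{1..n}. win (a i) (b j)) / n"
      using expectation_uniform_permutation_apply[of "{1..n}" i] by simp
  qed
  finally show ?thesis
    by (simp add: sum_divide_distrib)
qed

lemma w_exp_le: "w_exp n p q a b \<le> n"
proof -
  let ?f = "\<lambda>(\<tau>, \<sigma>). \<Sum>i\<in>{1..n}. win (a (\<tau> i)) (b (\<sigma> i))"
  have bound: "\<bar>?f x\<bar> \<le> real n" for x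
    using sum_mono[of "{1..n}" "\<lambda>i. win (a (fst x i)) (b (snd x i))" "\<lambda>_. 1"]
    by (simp add: case_prod_beta win_nonneg win_le_one sum_nonneg)
  have "integrable (pair_pmf p q) ?f"
    by (rule measure_pmf.integrable_const_bound[where B = "real n"]) (use bound in auto)
  then show ?thesis
    unfolding w_exp_def
    by (rule measure_pmf.integral_le_const) (rule AE_I2, rule abs_le_D1, rule bound)
qed

lemma w_exp_le_W:
  assumes "bidding_alg n bud p a"
  shows "w_exp n p q a b \<le> W n bud q b"
  unfolding W_def
proof (rule cSup_upper)
  show "w_exp n p q a b \<in> {w_exp n p' q a' b |p' a'. bidding_alg n bud p' a'}"
    using assms by blast
  show "bdd_above {w_exp n p' q a' b |p' a'. bidding_alg n bud p' a'}"
    by (rule bdd_aboveI[where M = "real n"]) (auto simp: w_exp_le)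
qed

lemma of_nat_le_sum_win:
  assumes mono: "\<forall>i\<in>{1..n}. \<forall>j\<in>{1..n}. i \<le> j \<longrightarrow> b i \<le> b j"
    and "t \<le> n" and "beta0 b t < x"
  shows "real t \<le> (\<Sum>j\<in>{1..n}. win x (b j))"
proof -
  have "win x (b j) = 1" if "j \<in> {1..t}" for j
  proof -
    have "b j \<le> b t"
      using mono that \<open>t \<le> n\<close> by auto
    also have "\<dots> = beta0 b t"
      using that by (simp add: beta0_def)
    finally show ?thesis
      using \<open>beta0 b t < x\<close> by (simp add: win_def)
  qed
  then have "real t = (\<Sum>j\<in>{1..t}. win x (b j))"
    by simp
  also have "\<dots> \<le> (\<Sum>j\<in>{1..n}. win x (b j))"
    using \<open>t \<le> n\<close> by (intro sum_mono2) (auto simp: win_nonneg)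
  finally show ?thesis .
qed

lemma W_pi_unif_ge_mean_bid_index:
  fixes t :: "nat \<Rightarrow> nat"
  assumes nonneg: "\<forall>i\<in>{1..n}. 0 \<le> b i"
    and mono: "\<forall>i\<in>{1..n}. \<forall>j\<in>{1..n}. i \<le> j \<longrightarrow> b i \<le> b j"
    and t_le: "\<forall>i\<in>{1..n}. t i \<le> n"
    and cost: "(\<Sum>i\<in>{1..n}. beta0 b (t i)) < bud"
  shows "(\<Sum>i\<in>{1..n}. real (t i)) / n \<le> W n bud (pi_unif n) b"
proof -
  define eps where "eps = (bud - (\<Sum>i\<in>{1..n}. beta0 b (t i))) / n"
  define a where "a i = beta0 b (t i) + eps" for i
  have eps_pos: "0 < eps" if "i \<in> {1..n}" for i
    using that cost by (simp add: eps_def)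
  have eps_nonneg: "0 \<le> eps"
    using cost by (simp add: eps_def)
  have alg: "bidding_alg n bud (return_pmf id) a"
    unfolding bidding_alg_def
  proof (intro conjI ballI)
    show "set_pmf (return_pmf id) \<subseteq> {\<tau>. \<tau> permutes {1..n}}"
      by simp
    show "0 \<le> a i" if "i \<in> {1..n}" for i
      using that nonneg t_le eps_nonneg by (auto simp: a_def beta0_def)
    have "n * eps \<le> bud - (\<Sum>i\<in>{1..n}. beta0 b (t i))"
      using cost by (cases "n = 0") (simp_all add: eps_def)
    then show "(\<Sum>i\<in>{1..n}. a i) \<le> bud"
      by (simp add: a_def sum.distrib)
  qed
  have "(\<Sum>i\<in>{1..n}. real (t i)) \<le> (\<Sum>i\<in>{1..n}. \<Sum>j\<in>{1..n}. win (a i) (b j))"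
    using mono t_le eps_pos by (intro sum_mono of_nat_le_sum_win) (auto simp: a_def)
  then have "(\<Sum>i\<in>{1..n}. real (t i)) / n \<le> w_exp n (return_pmf id) (pi_unif n) a b"
    by (simp add: w_exp_id_pi_unif divide_right_mono)
  also have "\<dots> \<le> W n bud (pi_unif n) b"
    using alg by (rule w_exp_le_W)
  finally show ?thesis .
qed

lemma length_sorted_list_of_multiset [simp]: "length (sorted_list_of_multiset M) = size M"
  by (metis mset_sorted_list_of_multiset size_mset)

lemma sum_mset_eq_sum_nth_sorted_list:
  "(\<Sum>x\<in>#M. g x) = (\<Sum>i\<in>{1..size M}. g (sorted_list_of_multiset M ! (i - 1)))"
proof -
  let ?xs = "sorted_list_of_multiset M"
  have "(\<Sum>x\<in>#M. g x) = sum_list (map g ?xs)"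
    by (metis mset_map mset_sorted_list_of_multiset sum_mset_sum_list)
  also have "\<dots> = (\<Sum>i\<in>{1..size M}. g (?xs ! (i - 1)))"
    by (simp add: sum.atLeast1_atMost_eq sum_list_sum_nth atLeast0LessThan)
  finally show ?thesis .
qed

theorem lemma2:
  fixes n l :: nat and R beta :: real and b :: "nat \<Rightarrow> real" and I :: "nat multiset"
  assumes "n \<ge> 1" and "R > 0" and "beta > 0"
    and "\<forall>i\<in>{1..n}. 0 \<le> b i"
    and "\<forall>i\<in>{1..n}. \<forall>j\<in>{1..n}. i \<le> j \<longrightarrow> b i \<le> b j"
    and "(\<Sum>i\<in>{1..n}. b i) = beta"
    and "l \<in> {1..n}"
    and "l_set l I"
    and P1: "size I \<le> n"
    and P2: "real (sum_mset I) \<ge> R_l R l * real l * (real l + 1) / 2"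
    and P3: "sigma_I n b I l + (real n - real (size I)) * beta0 b (n - l) < R * beta"
  shows "W n (R * beta) (pi_unif n) b \<ge> f_l n R l"
proof -
  define J where "J = I + replicate_mset (n - size I) 0"
  define xs where "xs = sorted_list_of_multiset J"
  define t where "t i = n - l + xs ! (i - 1)" for i
  have "size J = n"
    using P1 by (simp add: J_def)
  then have listing: "(\<Sum>i\<in>{1..n}. g (t i)) = (\<Sum>x\<in>#J. g (n - l + x))" for g :: "nat \<Rightarrow> real"
    by (simp add: t_def xs_def sum_mset_eq_sum_nth_sorted_list[of _ J])
  have "t i \<le> n" if "i \<in> {1..n}" for i
  proof -
    have "xs ! (i - 1) \<in># J"
      using that \<open>size J = n\<close> nth_mem[of "i - 1" xs] by (auto simp: xs_def)
    then show ?thesis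
      using \<open>l_set l I\<close> \<open>l \<in> {1..n}\<close> by (auto simp: t_def J_def l_set_def split: if_splits)
  qed
  moreover have "(\<Sum>i\<in>{1..n}. beta0 b (t i)) < R * beta"
    using P1 P3 unfolding listing[of "beta0 b"] by (simp add: J_def sigma_I_def of_nat_diff)
  ultimately have "(\<Sum>i\<in>{1..n}. real (t i)) / n \<le> W n (R * beta) (pi_unif n) b"
    using assms(4,5) by (intro W_pi_unif_ge_mean_bid_index) auto
  moreover have "(\<Sum>i\<in>{1..n}. real (t i)) = n * (n - l) + sum_mset I"
    using P1 unfolding listing[of real]
    by (simp add: J_def sum_mset.distrib of_nat_sum_mset of_nat_diff left_diff_distrib)
  moreover have "f_l n R l = (n * (n - l) + R_l R l * l * (real l + 1) / 2) / n"
    using \<open>n \<ge> 1\<close> \<open>l \<in> {1..n}\<close> by (simp add: f_l_def of_nat_diff field_simps)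
  moreover have "\<dots> \<le> (n * (n - l) + sum_mset I) / n"
    using P2 by (intro divide_right_mono add_left_mono) simp_all
  ultimately show ?thesis
    by simp
qed

end
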